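(* Assume the setting below, in which $Q:[0,T_1)\to\mathbb{R}$ is defined by $Q(t)=\int_{B_{R(t)}}\mathbf x\cdot\mathbf u\sqrt{1+|\mathbf u|^2}(\varrho+p+\Pi)\,dx$ for a solution existing on $[0,T_1)$, $E=E(0)>0$, $R(t)=R_0+ct$ with $0<c<1$, and $b$ is the constant below. Suppose $Q$ satisfies on $[0,T_1)$ $$\dot Q\ge E+bR^3-\sqrt{(E+bR^3)^2-\frac{Q^2}{R^2}}-kR^3$$ for some constant $k>0$. Assume there exists $\bar R>R_0$ such that, with $A=c\big(1+\frac{3b\bar R^3}{E+b\bar R^3}\big)$ and $B=\frac{k\bar R^3}{E+b\bar R^3}$, $$A^2+2B-B^2>0,\quad A+B<1,\quad z_0:=\frac{A(1-B)+\sqrt{A^2+2B-B^2}}{A^2+1}<1,$$ $$\int_{\frac12+\frac{z_0}{2}}^1\frac{dz}{1-\sqrt{1-z^2}-Az-B}<\log\Big(\frac{\bar R}{R_0}\Big),\qquad \frac{Q(0)}{R_0(E+bR_0^3)}>\frac{z_0}{2}+\frac12.$$ Then $T_1<(\bar R-R_0)/c$; i.e. $Q$ is necessarily defined only on a finite interval and cannot be extended smoothly, as a function satisfying the differential inequality, up to time $(\bar R-R_0)/c$.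
   Context: Setting: Minkowski space $\mathbb{R}^{1+3}$ ($g=\mathrm{diag}(-1,1,1,1)$), $B_R=\{|x|<R\}$. $(\varrho,n,\Pi,u)$ is a smooth admissible solution of the Müller–Israel–Stewart equations $u^\alpha\partial_\alpha\varrho+(\varrho+p+\Pi)\partial_\alpha u^\alpha=0$, $(\varrho+p+\Pi)u^\beta\partial_\beta u_\alpha+(g_\alpha^\beta+u_\alpha u^\beta)\partial_\beta(p+\Pi)=0$, $u^\alpha\partial_\alpha n+n\partial_\alpha u^\alpha=0$, $\tau_0u^\alpha\partial_\alpha\Pi+\Pi+\lambda\Pi^2+\zeta\partial_\alpha u^\alpha=0$ (values in $\mathcal P=\{\varrho>0,n>0,0<c_s^2<1\}$, $c_s^2=\frac{\zeta}{\tau_0(\varrho+p+\Pi)}+\partial_\varrho p+\frac{n\partial_np}{\varrho+p+\Pi}$), under assumptions (A1)–(A5): (A1) $p,\zeta,\tau_0$ smooth on $\mathbb{R}^+\times\mathbb{R}^+$ with smooth extensions to $\mathbb{R}\times\mathbb{R}^+$, constants $p_0,p_1\ge0$ with $-\varrho\le p\le\varrho+p_1$, $-p_0<p$ at physical states; (A2) $p$ globally Lipschitz on $\mathbb{R}\times\mathbb{R}^+$, $\partial_\varrho p,\partial_np\ne0$ at physical states; (A3) $\zeta\ge0$, $\tau_0>c'>0$ smooth on $\mathbb{R}\times\mathbb{R}^+$, $\partial_\varrho(\zeta/\tau_0),\partial_n(\zeta/\tau_0)$ bounded, $\partial_\varrho(\zeta/\tau_0)\ge0$; (A4) $\int_0^\infty\frac1n\sup_\varrho|\zeta/\tau_0|dn\le\bar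 A$ for a constant $\bar A>0$; (A5) $\lambda\equiv0$ or $\lambda>0$ smooth with $p+\varrho<1/\lambda$ at physical states. The initial data satisfy $\mathring\varrho+p+\mathring\Pi\ge0$ and the solution equals $(\bar\varrho,\bar n,0,\mathbf u=0)$ outside $B_{R(t)}$. $E=\int_{\mathbb{R}^3}\big((\varrho+p+\Pi)(u^0)^2-(p+\Pi)-\bar\varrho\big)dx$ at $t=0$, with $u^0=\sqrt{1+|\mathbf u|^2}$. $b=\frac{4\pi}{3}(\bar\varrho+p_1+\|\mathring\Pi\|_\infty+3\bar A)$. *)

theory Defs
  imports "HOL-Analysis.Analysis"
begin

end

theory Submission
  imports Defs
begin

(*
  Write R = R0 + c t and z = Q / (R (E + b R^3)). As long as R <= Rbar and z >= 0, the
  differential inequality for Q becomes R z' >= g z with g z = 1 - sqrt (1 - z^2) - A z - B,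
  and the hypotheses on A and B make g positive on (z0, 1]. The radicand condition gives
  z <= 1, so z increases whenever it lies above z1 = (1 + z0) / 2, and having started above z1
  it stays there. Separating variables, ln (R t / R0) <= c * (integral of 1 / g over [z1, 1]),
  which is less than ln (Rbar / R0); so the solution cannot survive until R reaches Rbar.
*)

definition growth_bound :: "real \<Rightarrow> real \<Rightarrow> real \<Rightarrow> real" where
  "growth_bound A B z = 1 - sqrt (1 - z\<^sup>2) - A * z - B"

(* the larger root of (1 - A z - B)^2 = 1 - z^2 *)
definition growth_root :: "real \<Rightarrow> real \<Rightarrow> real" where
  "growth_root A B = (A * (1 - B) + sqrt (A\<^sup>2 + 2 * B - B\<^sup>2)) / (A\<^sup>2 + 1)"

lemma growth_root_nonneg:
  assumes "0 \<le> A" "A + B < 1" "0 \<le> A\<^sup>2 + 2 * B - B\<^sup>2"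
  shows "0 \<le> growth_root A B"
  unfolding growth_root_def using assms
  by (intro divide_nonneg_pos add_nonneg_nonneg mult_nonneg_nonneg add_nonneg_pos) auto

lemma growth_bound_pos:
  fixes A B z :: real
  assumes A: "0 \<le> A" and AB: "A + B < 1" and D: "0 \<le> A\<^sup>2 + 2 * B - B\<^sup>2"
    and z0_less: "growth_root A B < z" and z_le: "z \<le> 1"
  shows "0 < growth_bound A B z"
proof -
  define s where "s = sqrt (A\<^sup>2 + 2 * B - B\<^sup>2)"
  define K where "K = A\<^sup>2 + 1"
  have s: "0 \<le> s" "s\<^sup>2 = A\<^sup>2 + 2 * B - B\<^sup>2" using D by (auto simp: s_def)
  have K: "K > 0" by (simp add: K_def add_nonneg_pos)
  have factor: "(1 - A * z - B)\<^sup>2 - (1 - z\<^sup>2)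
      = (K * z - (A * (1 - B) + s)) * (K * z - (A * (1 - B) - s)) / K"
    using K s(2) by (simp add: K_def field_simps power2_eq_square)
  have "K * z > A * (1 - B) + s" using z0_less K by (simp add: growth_root_def s_def K_def field_simps)
  moreover have "A * (1 - B) - s \<le> A * (1 - B) + s" using s by simp
  ultimately have "0 < (K * z - (A * (1 - B) + s)) * (K * z - (A * (1 - B) - s)) / K"
    using K by (intro divide_pos_pos mult_pos_pos) auto
  then have "1 - z\<^sup>2 < (1 - A * z - B)\<^sup>2" using factor by linarith
  moreover have "0 < 1 - A * z - B" using AB A z_le mult_left_le[of z A] by linarith
  ultimately have "sqrt (1 - z\<^sup>2) < 1 - A * z - B" by (metis real_sqrt_abs real_sqrt_less_mono abs_of_pos)
  then show ?thesis by (simp add: growth_bound_def)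
qed

lemma stays_above_barrier:
  fixes f f' :: "real \<Rightarrow> real"
  assumes cont: "continuous_on {a..<b} f"
    and deriv: "\<And>x. x \<in> {a<..<b} \<Longrightarrow> (f has_real_derivative f' x) (at x)"
    and nonneg: "\<And>x. x \<in> {a<..<b} \<Longrightarrow> y < f x \<Longrightarrow> 0 \<le> f' x"
    and start: "y < f a" and t: "t \<in> {a..<b}"
  shows "y < f t"
proof (rule ccontr)
  assume "\<not> y < f t"
  define K where "K = {a..t} \<inter> f -` {..y}"
  have cont_t: "continuous_on {a..t} f" using cont by (rule continuous_on_subset) (use t in auto)
  have "compact K"
    unfolding K_def compact_eq_bounded_closed
    by (auto intro: continuous_closed_preimage[OF cont_t] bounded_subset[of "{a..t}"])
  moreover have "t \<in> K" using t \<open>\<not> y < f t\<close> by (auto simp: K_def)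
  ultimately obtain t0 where t0: "t0 \<in> K" and first: "\<And>s. s \<in> K \<Longrightarrow> t0 \<le> s"
    using compact_attains_inf[of K] by blast
  have "f a \<le> f t0"
  proof (rule DERIV_nonneg_imp_increasing_open[of a t0 f])
    show "a \<le> t0" using t0 by (simp add: K_def)
    show "continuous_on {a..t0} f" using cont_t by (rule continuous_on_subset) (use t0 in \<open>auto simp: K_def\<close>)
  next
    fix x assume x: "a < x" "x < t0"
    then have "x \<notin> K" using first by force
    then have "y < f x" using x t0 by (auto simp: K_def)
    moreover have "x \<in> {a<..<b}" using x t0 t by (auto simp: K_def)
    ultimately show "\<exists>y. (f has_real_derivative y) (at x) \<and> 0 \<le> y"
      using deriv nonneg by blast
  qed
  then show False using start t0 by (auto simp: K_def)
qed

lemma separation_of_variables_le: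
  fixes g z z' r r' :: "real \<Rightarrow> real"
  assumes g_cont: "continuous_on {a..b} g" and g_pos: "\<And>u. u \<in> {a..b} \<Longrightarrow> 0 < g u"
    and "s \<le> t" and z_cont: "continuous_on {s..t} z" and z_range: "\<And>x. x \<in> {s..t} \<Longrightarrow> z x \<in> {a..b}"
    and z_deriv: "\<And>x. x \<in> {s<..<t} \<Longrightarrow> (z has_real_derivative z' x) (at x)"
    and r_cont: "continuous_on {s..t} r"
    and r_deriv: "\<And>x. x \<in> {s<..<t} \<Longrightarrow> (r has_real_derivative r' x) (at x)"
    and ineq: "\<And>x. x \<in> {s<..<t} \<Longrightarrow> g (z x) * r' x \<le> z' x"
  shows "r t - r s \<le> integral {a..z t} (\<lambda>u. 1 / g u) - integral {a..z s} (\<lambda>u. 1 / g u)"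
proof -
  define G where "G u = integral {a..u} (\<lambda>u. 1 / g u)" for u
  have "continuous_on {a..b} (\<lambda>u. 1 / g u)"
    by (intro continuous_on_divide continuous_on_const g_cont) (use g_pos in fastforce)
  then have G_deriv: "\<And>u. u \<in> {a..b} \<Longrightarrow> (G has_real_derivative 1 / g u) (at u within {a..b})"
    unfolding G_def by (rule integral_has_real_derivative)
  then have "continuous_on {a..b} G"
    using DERIV_continuous continuous_on_eq_continuous_within by blast
  moreover have "z ` {s..t} \<subseteq> {a..b}" using z_range by (simp add: image_subset_iff)
  ultimately have Gz_cont: "continuous_on {s..t} (\<lambda>x. G (z x))"
    using continuous_on_compose2[OF _ z_cont] by blast
  have "G (z s) - r s \<le> G (z t) - r t"
  proof (rule DERIV_nonneg_imp_increasing_open[of s t "\<lambda>x. G (z x) - r x"])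
    fix x assume x: "s < x" "x < t"
    have "z x \<in> {a..b}" using x z_range by auto
    then have "(G has_real_derivative 1 / g (z x)) (at (z x) within z ` {s<..<t})"
      by (rule has_field_derivative_subset[OF G_deriv])
        (use z_range in \<open>simp add: image_subset_iff\<close>)
    then have "(G \<circ> z has_real_derivative 1 / g (z x) * z' x) (at x within {s<..<t})"
      using z_deriv[of x] x by (intro DERIV_image_chain) (auto intro: has_field_derivative_at_within)
    moreover have "at x within {s<..<t} = at x" using x by (intro at_within_open) auto
    ultimately have "((\<lambda>x. G (z x)) has_real_derivative 1 / g (z x) * z' x) (at x)"
      by (simp add: comp_def)
    then have "((\<lambda>x. G (z x) - r x) has_real_derivative 1 / g (z x) * z' x - r' x) (at x)"
      using r_deriv x by (intro DERIV_diff) auto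
    moreover have "r' x \<le> 1 / g (z x) * z' x"
      using ineq[of x] g_pos[OF \<open>z x \<in> {a..b}\<close>] x by (simp add: field_simps)
    ultimately show "\<exists>y. ((\<lambda>x. G (z x) - r x) has_real_derivative y) (at x) \<and> 0 \<le> y"
      by auto
  next
    show "continuous_on {s..t} (\<lambda>x. G (z x) - r x)" using Gz_cont r_cont by (rule continuous_on_diff)
  qed (fact \<open>s \<le> t\<close>)
  then show ?thesis by (simp add: G_def)
qed

lemma log_radius_le_integral:
  fixes z z' g :: "real \<Rightarrow> real" and a c R0 t :: real
  assumes c: "0 < c" and R0: "0 < R0" and t: "0 \<le> t"
    and g_cont: "continuous_on {a..1} g" and g_pos: "\<And>u. u \<in> {a..1} \<Longrightarrow> 0 < g u"
    and z_cont: "continuous_on {0..t} z" and z_range: "\<And>x. x \<in> {0..t} \<Longrightarrow> z x \<in> {a..1}"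
    and z_deriv: "\<And>x. x \<in> {0<..<t} \<Longrightarrow> (z has_real_derivative z' x) (at x)"
    and growth: "\<And>x. x \<in> {0<..<t} \<Longrightarrow> g (z x) \<le> (R0 + c * x) * z' x"
  shows "ln ((R0 + c * t) / R0) \<le> c * integral {a..1} (\<lambda>u. 1 / g u)"
proof -
  have R_pos: "0 < R0 + c * x" if "0 \<le> x" for x using that c R0 by (simp add: add_pos_nonneg)
  have inv_int: "(\<lambda>u. 1 / g u) integrable_on {a..1}"
    using g_cont g_pos
    by (intro integrable_continuous_interval continuous_on_divide continuous_on_const) fastforce+
  have "ln (R0 + c * t) / c - ln (R0 + c * 0) / c
      \<le> integral {a..z t} (\<lambda>u. 1 / g u) - integral {a..z 0} (\<lambda>u. 1 / g u)"
  proof (rule separation_of_variables_le[OF g_cont g_pos t z_cont z_range z_deriv,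
        where r' = "\<lambda>x. 1 / (R0 + c * x)"])
    show "continuous_on {0..t} (\<lambda>x. ln (R0 + c * x) / c)"
    proof (intro continuous_intros ballI)
      show "R0 + c * x \<noteq> 0" if "x \<in> {0..t}" for x using R_pos[of x] that by auto
    qed (use c in auto)
    show "((\<lambda>x. ln (R0 + c * x) / c) has_real_derivative 1 / (R0 + c * x)) (at x)"
      if "x \<in> {0<..<t}" for x
      using R_pos[of x] that c by (auto intro!: derivative_eq_intros)
    show "g (z x) * (1 / (R0 + c * x)) \<le> z' x" if "x \<in> {0<..<t}" for x
      using growth[of x] R_pos[of x] that by (auto simp: field_simps)
  qed auto
  also have "\<dots> \<le> integral {a..1} (\<lambda>u. 1 / g u)"
  proof -
    have "integral {a..z t} (\<lambda>u. 1 / g u) \<le> integral {a..1} (\<lambda>u. 1 / g u)"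
      using inv_int g_pos z_range[of t] t
      by (intro integral_subset_le integrable_on_subinterval[OF inv_int]) (auto intro: less_imp_le)
    moreover have "0 \<le> integral {a..z 0} (\<lambda>u. 1 / g u)"
      using g_pos z_range[of 0] t
      by (intro integral_nonneg integrable_on_subinterval[OF inv_int]) (auto intro: less_imp_le)
    ultimately show ?thesis by linarith
  qed
  finally show ?thesis
    using c R0 R_pos[OF t]
    by (simp add: ln_div diff_divide_distrib[symmetric] pos_divide_le_eq mult.commute)
qed

lemma lifespan_bound:
  fixes z z' g :: "real \<Rightarrow> real" and a c R0 Rbar T :: real
  assumes c: "0 < c" "c \<le> 1" and R0: "0 < R0" and Rbar: "R0 < Rbar"
    and g_cont: "continuous_on {a..1} g" and g_pos: "\<And>u. u \<in> {a..1} \<Longrightarrow> 0 < g u"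
    and z_deriv: "\<And>t. t \<in> {0..<T} \<Longrightarrow> (z has_real_derivative z' t) (at t within {0..<T})"
    and z_le: "\<And>t. t \<in> {0..<T} \<Longrightarrow> z t \<le> 1"
    and growth: "\<And>t. t \<in> {0..<T} \<Longrightarrow> R0 + c * t \<le> Rbar \<Longrightarrow> a \<le> z t
                   \<Longrightarrow> g (z t) \<le> (R0 + c * t) * z' t"
    and z_start: "a < z 0"
    and integral_less: "integral {a..1} (\<lambda>u. 1 / g u) < ln (Rbar / R0)"
  shows "T < (Rbar - R0) / c"
proof (rule ccontr)
  define Ts where "Ts = (Rbar - R0) / c"
  assume "\<not> T < (Rbar - R0) / c"
  then have sub: "{0..<Ts} \<subseteq> {0..<T}" by (auto simp: Ts_def)
  have radius: "0 < R0 + c * t" "R0 + c * t \<le> Rbar" if "t \<in> {0..<Ts}" for t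
    using that c R0 by (auto simp: Ts_def field_simps add_pos_nonneg)
  have z_at: "(z has_real_derivative z' t) (at t)" if "t \<in> {0<..<Ts}" for t
    using z_deriv[of t] at_within_interior[of t "{0..<T}"] that sub by auto
  have "continuous_on {0..<T} z"
    using z_deriv DERIV_continuous continuous_on_eq_continuous_within by blast
  then have z_cont: "continuous_on {0..<Ts} z" using sub by (rule continuous_on_subset)
  have above: "a < z t" if "t \<in> {0..<Ts}" for t
  proof (rule stays_above_barrier[OF z_cont z_at _ z_start that])
    fix x assume x: "x \<in> {0<..<Ts}" "a < z x"
    then have "0 < (R0 + c * x) * z' x"
      using g_pos[of "z x"] growth[of x] z_le[of x] radius[of x] sub by fastforce
    then show "0 \<le> z' x" using radius[of x] x by (simp add: zero_less_mult_iff)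
  qed auto
  define I where "I = integral {a..1} (\<lambda>u. 1 / g u)"
  have log_bound: "ln ((R0 + c * t) / R0) \<le> c * I" if t: "t \<in> {0..<Ts}" for t
    unfolding I_def
  proof (rule log_radius_le_integral[OF c(1) R0 _ g_cont g_pos])
    show "continuous_on {0..t} z" using z_cont by (rule continuous_on_subset) (use t in auto)
    show "z x \<in> {a..1}" if "x \<in> {0..t}" for x using above[of x] z_le[of x] that t sub by auto
    show "g (z x) \<le> (R0 + c * x) * z' x" if "x \<in> {0<..<t}" for x
      using growth[of x] above[of x] radius[of x] that t sub by auto
  qed (use z_at t in auto)
  have "0 < Ts" using c Rbar by (simp add: Ts_def)
  then have "0 \<le> I" using log_bound[of 0] c R0 by (simp add: zero_le_mult_iff)
  (* a time before R reaches Rbar at which ln (R / R0) already exceeds I *)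
  define L where "L = (I + ln (Rbar / R0)) / 2"
  define t where "t = R0 * (exp L - 1) / c"
  have L: "I < L" "L < ln (Rbar / R0)" "0 \<le> L"
    using integral_less \<open>0 \<le> I\<close> by (auto simp: L_def I_def)
  then have "exp L < Rbar / R0"
    using R0 Rbar by (metis exp_less_cancel_iff exp_ln divide_pos_pos less_trans)
  then have t: "t \<in> {0..<Ts}" using L(3) R0 c unfolding Ts_def t_def by (auto simp: field_simps)
  have "(R0 + c * t) / R0 = exp L" using c R0 by (simp add: t_def field_simps)
  then have "L \<le> c * I" using log_bound[OF t] by simp
  also have "\<dots> \<le> I" using c \<open>0 \<le> I\<close> by (simp add: mult_left_le_one_le)
  finally show False using L(1) by linarith
qed

lemma cube_ratio_mono:
  fixes E b R Rbar :: real
  assumes "0 < E" "0 \<le> b" "0 \<le> R" "R \<le> Rbar"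
  shows "R ^ 3 / (E + b * R ^ 3) \<le> Rbar ^ 3 / (E + b * Rbar ^ 3)"
proof -
  have "R ^ 3 \<le> Rbar ^ 3" using assms by (simp add: power_mono)
  then have "R ^ 3 * (E + b * Rbar ^ 3) \<le> Rbar ^ 3 * (E + b * R ^ 3)"
    using assms by (simp add: algebra_simps)
  moreover have "0 < E + b * R ^ 3" "0 < E + b * Rbar ^ 3" using assms by (auto intro: add_pos_nonneg)
  ultimately show ?thesis by (simp add: divide_simps)
qed

lemma normalized_has_derivative:
  fixes Q :: "real \<Rightarrow> real" and R0 c t E b q :: real
  defines "R \<equiv> R0 + c * t" and "F \<equiv> E + b * (R0 + c * t) ^ 3"
  assumes Q: "(Q has_real_derivative q) (at t within S)" and "R \<noteq> 0" "F \<noteq> 0"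
  shows "((\<lambda>s. Q s / ((R0 + c * s) * (E + b * (R0 + c * s) ^ 3))) has_real_derivative
           (q / F - c * (1 + 3 * b * R ^ 3 / F) * (Q t / (R * F))) / R) (at t within S)"
proof -
  have P: "((\<lambda>s. (R0 + c * s) * (E + b * (R0 + c * s) ^ 3)) has_real_derivative
             c * F + R * (3 * b * R\<^sup>2 * c)) (at t within S)"
    unfolding R_def F_def by (auto intro!: derivative_eq_intros)
  have "R * F \<noteq> 0" using assms by simp
  from DERIV_divide[OF Q P, folded F_def R_def, OF this] show ?thesis
    by (rule DERIV_cong) (use \<open>R \<noteq> 0\<close> \<open>F \<noteq> 0\<close> in \<open>simp add: field_simps power2_eq_square power3_eq_cube\<close>)
qed

lemma normalized_growth_bound:
  fixes E b k c R Rbar q q' :: real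
  defines "F \<equiv> E + b * R ^ 3"
    and "A \<equiv> c * (1 + 3 * b * Rbar ^ 3 / (E + b * Rbar ^ 3))"
    and "B \<equiv> k * Rbar ^ 3 / (E + b * Rbar ^ 3)"
  assumes E: "0 < E" and b: "0 \<le> b" and k: "0 \<le> k" and c: "0 \<le> c"
    and R: "0 < R" "R \<le> Rbar" and z_nonneg: "0 \<le> q / (R * F)"
    and diffineq: "F - sqrt (F\<^sup>2 - q\<^sup>2 / R\<^sup>2) - k * R ^ 3 \<le> q'"
  shows "growth_bound A B (q / (R * F)) \<le> q' / F - c * (1 + 3 * b * R ^ 3 / F) * (q / (R * F))"
proof -
  define z where "z = q / (R * F)"
  have F: "0 < F" unfolding F_def using E b R by (intro add_pos_nonneg) auto
  have "sqrt (F\<^sup>2 - q\<^sup>2 / R\<^sup>2) = F * sqrt (1 - z\<^sup>2)"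
  proof -
    have "F\<^sup>2 - q\<^sup>2 / R\<^sup>2 = F\<^sup>2 * (1 - z\<^sup>2)"
      unfolding z_def using F R by (simp add: field_simps power2_eq_square)
    then show ?thesis using F by (simp add: real_sqrt_mult)
  qed
  then have "F * (1 - sqrt (1 - z\<^sup>2) - k * (R ^ 3 / F)) \<le> q'"
    using diffineq F by (simp add: algebra_simps)
  then have "1 - sqrt (1 - z\<^sup>2) - k * (R ^ 3 / F) \<le> q' / F"
    using F by (simp add: le_divide_eq mult.commute)
  moreover have ratio: "R ^ 3 / F \<le> Rbar ^ 3 / (E + b * Rbar ^ 3)"
    unfolding F_def using cube_ratio_mono E b R by auto
  then have "k * (R ^ 3 / F) \<le> B" unfolding B_def using mult_left_mono[OF ratio k] by simp
  moreover have "c * (1 + 3 * b * R ^ 3 / F) \<le> A"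
    unfolding A_def using mult_left_mono[OF ratio, of "3 * b"] b c by (intro mult_left_mono) auto
  then have "c * (1 + 3 * b * R ^ 3 / F) * z \<le> A * z"
    using z_nonneg by (intro mult_right_mono) (auto simp: z_def)
  ultimately show ?thesis unfolding growth_bound_def z_def[symmetric] by linarith
qed

lemma normalized_le_one:
  fixes q R F :: real
  assumes "0 < R" "0 < F" "q\<^sup>2 / R\<^sup>2 \<le> F\<^sup>2"
  shows "q / (R * F) \<le> 1"
proof -
  have "(q / (R * F))\<^sup>2 \<le> 1" using assms by (simp add: power_divide power_mult_distrib field_simps)
  then have "\<bar>q / (R * F)\<bar> \<le> 1" by (simp only: abs_square_le_1)
  then show ?thesis by (rule abs_le_D1)
qed

theorem mainTheorem10:
  fixes Q Q' :: "real \<Rightarrow> real"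
    and E b k c R0 Rbar T1 :: real
  assumes E_pos: "E > 0" and b_pos: "b > 0" and k_pos: "k > 0"
    and c_pos: "0 < c" and c_lt1: "c < 1" and R0_pos: "R0 > 0" and T1_pos: "T1 > 0"
    and deriv: "\<And>t. t \<in> {0..<T1} \<Longrightarrow> (Q has_real_derivative Q' t) (at t within {0..<T1})"
    and radicand: "\<And>t. t \<in> {0..<T1} \<Longrightarrow>
         (Q t)\<^sup>2 / (R0 + c * t)\<^sup>2 \<le> (E + b * (R0 + c * t) ^ 3)\<^sup>2"
    and diffineq: "\<And>t. t \<in> {0..<T1} \<Longrightarrow>
         Q' t \<ge> E + b * (R0 + c * t) ^ 3
                 - sqrt ((E + b * (R0 + c * t) ^ 3)\<^sup>2 - (Q t)\<^sup>2 / (R0 + c * t)\<^sup>2)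
                 - k * (R0 + c * t) ^ 3"
    and Rbar: "Rbar > R0"
    and h1: "(c * (1 + 3 * b * Rbar ^ 3 / (E + b * Rbar ^ 3)))\<^sup>2
              + 2 * (k * Rbar ^ 3 / (E + b * Rbar ^ 3))
              - (k * Rbar ^ 3 / (E + b * Rbar ^ 3))\<^sup>2 > 0"
    and h2: "c * (1 + 3 * b * Rbar ^ 3 / (E + b * Rbar ^ 3)) + k * Rbar ^ 3 / (E + b * Rbar ^ 3) < 1"
    and h3: "(let A = c * (1 + 3 * b * Rbar ^ 3 / (E + b * Rbar ^ 3));
                  B = k * Rbar ^ 3 / (E + b * Rbar ^ 3);
                  z0 = (A * (1 - B) + sqrt (A\<^sup>2 + 2 * B - B\<^sup>2)) / (A\<^sup>2 + 1)
              in z0 < 1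
                 \<and> integral {1/2 + z0/2 .. 1} (\<lambda>z. 1 / (1 - sqrt (1 - z\<^sup>2) - A * z - B)) < ln (Rbar / R0)
                 \<and> Q 0 / (R0 * (E + b * R0 ^ 3)) > z0 / 2 + 1/2)"
  shows "T1 < (Rbar - R0) / c"
proof -
  define A where "A = c * (1 + 3 * b * Rbar ^ 3 / (E + b * Rbar ^ 3))"
  define B where "B = k * Rbar ^ 3 / (E + b * Rbar ^ 3)"
  define z0 where "z0 = growth_root A B"
  define z where "z t = Q t / ((R0 + c * t) * (E + b * (R0 + c * t) ^ 3))" for t
  define z' where "z' t = (Q' t / (E + b * (R0 + c * t) ^ 3)
      - c * (1 + 3 * b * (R0 + c * t) ^ 3 / (E + b * (R0 + c * t) ^ 3)) * z t) / (R0 + c * t)" for t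
  have "z0 < 1"
    and integral_less: "integral {1/2 + z0/2..1} (\<lambda>u. 1 / growth_bound A B u) < ln (Rbar / R0)"
    and z_start: "1/2 + z0/2 < z 0"
    using h3
    unfolding Let_def A_def[symmetric] B_def[symmetric] growth_root_def[symmetric] z0_def[symmetric]
    by (auto simp: growth_bound_def z_def)
  have pos: "0 < R0 + c * t" "0 < E + b * (R0 + c * t) ^ 3" if "0 \<le> t" for t
    using that R0_pos c_pos E_pos b_pos by (auto intro!: add_pos_nonneg)
  have "0 \<le> A" unfolding A_def using c_pos b_pos E_pos R0_pos Rbar
    by (intro mult_nonneg_nonneg add_nonneg_nonneg divide_nonneg_nonneg) auto
  have "A + B < 1" "0 \<le> A\<^sup>2 + 2 * B - B\<^sup>2" using h1 h2 by (simp_all add: A_def B_def)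
  note AB = \<open>0 \<le> A\<close> this
  show ?thesis
  proof (rule lifespan_bound[where z = z and z' = z' and g = "growth_bound A B" and a = "1/2 + z0/2"])
    show "continuous_on {1/2 + z0/2..1} (growth_bound A B)"
      unfolding growth_bound_def by (intro continuous_intros)
    show "0 < growth_bound A B u" if "u \<in> {1/2 + z0/2..1}" for u
      using growth_bound_pos[OF AB, folded z0_def] that \<open>z0 < 1\<close> by auto
    show "(z has_real_derivative z' t) (at t within {0..<T1})" if "t \<in> {0..<T1}" for t
      unfolding z_def[abs_def] z'_def z_def
      using normalized_has_derivative[OF deriv[OF that]] pos[of t] that by auto
    show "z t \<le> 1" if "t \<in> {0..<T1}" for t
      unfolding z_def using normalized_le_one pos[of t] radicand[OF that] that by auto
    show "growth_bound A B (z t) \<le> (R0 + c * t) * z' t"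
      if t: "t \<in> {0..<T1}" and "R0 + c * t \<le> Rbar" "1/2 + z0/2 \<le> z t" for t
      using normalized_growth_bound[of E b k c "R0 + c * t" Rbar "Q t" "Q' t"] diffineq[OF t]
        growth_root_nonneg[OF AB, folded z0_def] that pos[of t] E_pos b_pos k_pos c_pos
      by (simp add: z'_def z_def A_def B_def)
  qed (use c_pos c_lt1 R0_pos Rbar z_start integral_less in auto)
qed

end
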